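(* Let $k>1$ and let $f$ be a positive differentiable function on $[0,1]$ such that $f$ is constant or $f$ is non-increasing. Consider the planar system $$\frac{dI}{d\tau}=I\,[f(R)(1-I-R)-k],\qquad \frac{dR}{d\tau}=(k-1)I-R.$$ If $f(0)/k<1$, then the system has no endemic equilibrium points. If $f(0)/k>1$, then the system has a unique endemic equilibrium point, and this endemic equilibrium point is locally stable.
   Context: An endemic equilibrium is an equilibrium point $(I^*,R^* )$ of the system with $I^*>0$. "Locally stable" means locally asymptotically stable (both eigenvalues of the Jacobian at the point have negative real part). *)

theory Defs
  imports Complex_Main
begin

definition endemic_eq :: "(real \<Rightarrow> real) \<Rightarrow> real \<Rightarrow> real \<Rightarrow> real \<Rightarrow> bool" where
  "endemic_eq f k I R \<longleftrightarrow>
     I > 0 \<and> 0 \<le> R \<and> R \<le> 1 \<and>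
     I * (f R * (1 - I - R) - k) = 0 \<and> (k - 1) * I - R = 0"

text \<open>Jacobian of the vector field at (I,R), where f' is the derivative of f.\<close>
definition jac11 :: "(real \<Rightarrow> real) \<Rightarrow> real \<Rightarrow> real \<Rightarrow> real \<Rightarrow> real" where
  "jac11 f k I R = f R * (1 - I - R) - k - I * f R"
definition jac12 :: "(real \<Rightarrow> real) \<Rightarrow> (real \<Rightarrow> real) \<Rightarrow> real \<Rightarrow> real \<Rightarrow> real" where
  "jac12 f f' I R = I * (f' R * (1 - I - R) - f R)"
definition jac21 :: "real \<Rightarrow> real" where
  "jac21 k = k - 1"
definition jac22 :: real where
  "jac22 = -1"

text \<open>Locally asymptotically stable: every (complex) eigenvalue of the Jacobian,
  i.e. every root of det(lambda*Id - J) = 0, has negative real part.\<close>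
definition locally_stable ::
  "(real \<Rightarrow> real) \<Rightarrow> (real \<Rightarrow> real) \<Rightarrow> real \<Rightarrow> real \<Rightarrow> real \<Rightarrow> bool" where
  "locally_stable f f' k I R \<longleftrightarrow>
     (\<forall>z::complex.
        (z - of_real (jac11 f k I R)) * (z - of_real jac22)
          - of_real (jac12 f f' I R) * of_real (jac21 k) = 0
        \<longrightarrow> Re z < 0)"

end

theory Submission
  imports Defs "HOL-Analysis.Analysis"
begin

text \<open>At an endemic equilibrium \<open>R = (k - 1) I\<close> and \<open>f R (1 - I - R) = k\<close>. Since \<open>1 - I - R\<close>
  strictly decreases along the line \<open>R = (k - 1) I\<close>, two equilibria \<open>R\<^sub>1 < R\<^sub>2\<close> would force
  \<open>f R\<^sub>1 < f R\<^sub>2\<close>, which a non-increasing \<open>f\<close> forbids; and \<open>k = f R (1 - I - R) < f R \<le> f 0\<close>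
  rules out equilibria when \<open>f 0 < k\<close>. When \<open>f 0 > k\<close> one exists by the intermediate value
  theorem. At an equilibrium the Jacobian has trace \<open>-I f R - 1 < 0\<close> and, because \<open>f' R \<le> 0\<close>,
  positive determinant, so both eigenvalues lie in the open left half-plane.\<close>

lemma antimono_on_Icc_imp_deriv_nonpos:
  fixes f :: "real \<Rightarrow> real"
  assumes anti: "antimono_on {a..b} f" and x: "x \<in> {a<..<b}"
    and deriv: "(f has_real_derivative D) (at x within {a..b})"
  shows "D \<le> 0"
proof -
  have "mono_on {a..b} (\<lambda>x. - f x)"
    using anti by (auto intro!: monotone_onI dest: monotone_onD)
  moreover have "((\<lambda>x. - f x) has_real_derivative - D) (at x)"
    using deriv at_within_Icc_at[of a x b] x by (simp add: DERIV_minus)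
  ultimately show ?thesis
    using mono_on_imp_deriv_nonneg x by fastforce
qed

lemma const_or_antitone_imp_antimono_on:
  fixes f :: "real \<Rightarrow> 'a::order"
  assumes "(\<forall>x\<in>{a..b}. f x = f a) \<or> (\<forall>x y. a \<le> x \<longrightarrow> x \<le> y \<longrightarrow> y \<le> b \<longrightarrow> f y \<le> f x)"
  shows "antimono_on {a..b} f"
proof (rule monotone_onI)
  fix x y
  assume x: "x \<in> {a..b}" and y: "y \<in> {a..b}" and "x \<le> y"
  from assms show "f y \<le> f x"
  proof
    assume const: "\<forall>z\<in>{a..b}. f z = f a"
    show ?thesis
      using bspec[OF const x] bspec[OF const y] by simp
  next
    assume "\<forall>x y. a \<le> x \<longrightarrow> x \<le> y \<longrightarrow> y \<le> b \<longrightarrow> f y \<le> f x"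
    then show ?thesis
      using x y \<open>x \<le> y\<close> by simp
  qed
qed

lemma char_poly2_root_Re_neg:
  fixes a b c d :: real and z :: complex
  assumes trace: "a + d < 0" and det: "a * d - b * c > 0"
    and root: "(z - of_real a) * (z - of_real d) - of_real b * of_real c = 0"
  shows "Re z < 0"
proof -
  have re: "(Re z - a) * (Re z - d) - Im z * Im z - b * c = 0"
    using arg_cong[OF root, of Re] by simp
  have im: "Im z * (2 * Re z - a - d) = 0"
    using arg_cong[OF root, of Im] by (simp add: algebra_simps)
  show ?thesis
  proof (cases "Im z = 0")
    case True
    then have "Re z * Re z - (a + d) * Re z + (a * d - b * c) = 0"
      using re by (simp add: algebra_simps)
    moreover have "Re z * Re z - (a + d) * Re z \<ge> 0" if "Re z \<ge> 0"
      using that trace mult_nonpos_nonneg[of "a + d" "Re z"] zero_le_square[of "Re z"] by linarith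
    ultimately show ?thesis
      using det by force
  next
    case False
    then show ?thesis
      using im trace by simp
  qed
qed

lemma endemic_eq_iff:
  assumes "k > 1"
  shows "endemic_eq f k I R \<longleftrightarrow>
           0 < R \<and> R \<le> 1 \<and> I = R / (k - 1) \<and> f R * (1 - I - R) = k"
proof -
  have "(k - 1) * I - R = 0 \<longleftrightarrow> I = R / (k - 1)"
    using assms by (auto simp: field_simps)
  moreover have "0 < R / (k - 1) \<longleftrightarrow> 0 < R"
    using assms by (simp add: zero_less_divide_iff)
  ultimately show ?thesis
    unfolding endemic_eq_def by auto
qed

lemma endemic_eq_bounds:
  assumes "k > 1" "0 < f R" "endemic_eq f k I R"
  shows "0 < I" "0 < 1 - I - R" "k < f R"
proof -
  show "0 < I"
    using assms(3) by (simp add: endemic_eq_def)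
  have eq: "f R * (1 - I - R) = k" and "0 < R"
    using assms(3) endemic_eq_iff[OF assms(1)] by auto
  then show "0 < 1 - I - R"
    using assms(1,2) zero_less_mult_pos[of "f R" "1 - I - R"] by simp
  have "f R * (1 - I - R) < f R * 1"
    using \<open>0 < I\<close> \<open>0 < R\<close> assms(2) by (intro mult_strict_left_mono) auto
  then show "k < f R"
    using eq by simp
qed

lemma endemic_eq_mem_interval:
  assumes "k > 1" "\<forall>x\<in>{0..1}. 0 < f x" and eq: "endemic_eq f k I R"
  shows "R \<in> {0<..<1}"
proof -
  have "0 < R" "R \<le> 1"
    using eq endemic_eq_iff[OF assms(1)] by auto
  then have "0 < f R"
    using assms(2) by simp
  then show ?thesis
    using endemic_eq_bounds(1,2)[OF assms(1) _ eq] \<open>0 < R\<close> by simp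
qed

lemma endemic_eq_imp_less_f0:
  assumes "k > 1" "\<forall>x\<in>{0..1}. 0 < f x" "antimono_on {0..1} f" and eq: "endemic_eq f k I R"
  shows "k < f 0"
proof -
  have R: "R \<in> {0<..<1}"
    using endemic_eq_mem_interval[OF assms(1,2) eq] .
  then have "k < f R"
    using endemic_eq_bounds(3)[OF assms(1) _ eq] assms(2) by simp
  also have "f R \<le> f 0"
    using monotone_onD[OF assms(3), of 0 R] R by simp
  finally show ?thesis .
qed

lemma endemic_eq_less_imp_less:
  assumes "k > 1" "0 < f R\<^sub>1" "0 < f R\<^sub>2"
    and eq1: "endemic_eq f k I\<^sub>1 R\<^sub>1" and eq2: "endemic_eq f k I\<^sub>2 R\<^sub>2" and "R\<^sub>1 < R\<^sub>2"
  shows "f R\<^sub>1 < f R\<^sub>2"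
proof -
  have I: "I\<^sub>1 = R\<^sub>1 / (k - 1)" "I\<^sub>2 = R\<^sub>2 / (k - 1)"
    and k: "f R\<^sub>1 * (1 - I\<^sub>1 - R\<^sub>1) = k" "f R\<^sub>2 * (1 - I\<^sub>2 - R\<^sub>2) = k"
    using eq1 eq2 endemic_eq_iff[OF \<open>k > 1\<close>] by auto
  have "I\<^sub>1 < I\<^sub>2"
    unfolding I using \<open>R\<^sub>1 < R\<^sub>2\<close> \<open>k > 1\<close> by (simp add: divide_strict_right_mono)
  then have "f R\<^sub>1 * (1 - I\<^sub>2 - R\<^sub>2) < f R\<^sub>1 * (1 - I\<^sub>1 - R\<^sub>1)"
    using \<open>R\<^sub>1 < R\<^sub>2\<close> \<open>0 < f R\<^sub>1\<close> by (intro mult_strict_left_mono) auto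
  also have "\<dots> = f R\<^sub>2 * (1 - I\<^sub>2 - R\<^sub>2)"
    using k by simp
  finally show ?thesis
    using endemic_eq_bounds(2)[OF assms(1,3) eq2] by (simp add: mult_less_cancel_right)
qed

lemma endemic_eq_unique:
  assumes "k > 1" "\<forall>x\<in>{0..1}. 0 < f x" "antimono_on {0..1} f"
    and eq1: "endemic_eq f k I\<^sub>1 R\<^sub>1" and eq2: "endemic_eq f k I\<^sub>2 R\<^sub>2"
  shows "I\<^sub>1 = I\<^sub>2 \<and> R\<^sub>1 = R\<^sub>2"
proof -
  have not_less: "\<not> R < R'" if eq: "endemic_eq f k I R" and eq': "endemic_eq f k I' R'"
    for I R I' R'
  proof
    assume "R < R'"
    have R: "R \<in> {0..1}" "R' \<in> {0..1}"
      using eq eq' by (auto simp: endemic_eq_def)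
    then have "f R < f R'"
      using endemic_eq_less_imp_less[OF assms(1) _ _ eq eq' \<open>R < R'\<close>] assms(2) by simp
    moreover have "f R' \<le> f R"
      using monotone_onD[OF assms(3) R] \<open>R < R'\<close> by simp
    ultimately show False
      by simp
  qed
  have "R\<^sub>1 = R\<^sub>2"
    using not_less[OF eq1 eq2] not_less[OF eq2 eq1] by simp
  then show ?thesis
    using eq1 eq2 endemic_eq_iff[OF \<open>k > 1\<close>] by auto
qed

lemma endemic_eq_exists:
  assumes "k > 1" "continuous_on {0..1} f" "k < f 0"
  shows "\<exists>I R. endemic_eq f k I R"
proof -
  define g where "g R = f R * (1 - R / (k - 1) - R) - k" for R
  define b where "b = (k - 1) / k"
  have b: "0 < b" "b < 1"
    using assms(1) by (auto simp: b_def)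
  have "continuous_on {0..b} g"
    unfolding g_def using b assms(1)
    by (intro continuous_intros continuous_on_subset[OF assms(2)]) auto
  moreover have "g b = - k"
    using assms(1) by (simp add: g_def b_def field_simps)
  ultimately obtain r where r: "0 \<le> r" "r \<le> b" "g r = 0"
    using IVT2'[of g b 0 0] assms b by (auto simp: g_def)
  moreover have "r \<noteq> 0"
    using r assms(3) by (auto simp: g_def)
  ultimately have "endemic_eq f k (r / (k - 1)) r"
    using assms(1) b by (simp add: endemic_eq_iff g_def)
  then show ?thesis
    by blast
qed

lemma endemic_eq_locally_stable:
  assumes "k > 1" "0 < f R" "f' R \<le> 0" and eq: "endemic_eq f k I R"
  shows "locally_stable f f' k I R"
proof -
  have I: "0 < I" and S: "0 < 1 - I - R" and k: "f R * (1 - I - R) = k"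
    using endemic_eq_bounds[OF assms(1,2) eq] eq endemic_eq_iff[OF assms(1)] by auto
  have j11: "jac11 f k I R = - I * f R"
    using k by (simp add: jac11_def)
  have "f' R * (1 - I - R) \<le> 0"
    using assms(3) S by (simp add: mult_nonpos_nonneg)
  then have "0 < f R - f' R * (1 - I - R)"
    using assms(2) by linarith
  then have "0 < I * (f R + (f R - f' R * (1 - I - R)) * (k - 1))"
    using I assms(1,2) by (simp add: add_pos_pos)
  then have det: "jac11 f k I R * jac22 - jac12 f f' I R * jac21 k > 0"
    by (simp add: j11 jac12_def jac21_def jac22_def algebra_simps)
  have trace: "jac11 f k I R + jac22 < 0"
    using mult_pos_pos[OF I assms(2)] by (simp add: j11 jac22_def)
  show ?thesis
    unfolding locally_stable_def using char_poly2_root_Re_neg[OF trace det] by blast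
qed

theorem proposition2:
  fixes f f' :: "real \<Rightarrow> real" and k :: real
  assumes k: "k > 1"
    and pos: "\<forall>x\<in>{0..1}. f x > 0"
    and deriv: "\<forall>x\<in>{0..1}. (f has_real_derivative f' x) (at x within {0..1})"
    and shape: "(\<forall>x\<in>{0..1}. f x = f 0) \<or>
                (\<forall>x y. 0 \<le> x \<longrightarrow> x \<le> y \<longrightarrow> y \<le> 1 \<longrightarrow> f y \<le> f x)"
  shows "(f 0 / k < 1 \<longrightarrow> \<not> (\<exists>I R. endemic_eq f k I R)) \<and>
         (f 0 / k > 1 \<longrightarrow>
            (\<exists>!p. endemic_eq f k (fst p) (snd p)) \<and>
            (\<forall>I R. endemic_eq f k I R \<longrightarrow> locally_stable f f' k I R))"
proof -
  have anti: "antimono_on {0..1} f"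
    using shape by (rule const_or_antitone_imp_antimono_on)
  have "\<not> endemic_eq f k I R" if "f 0 < k" for I R
    using that endemic_eq_imp_less_f0[OF k pos anti] by (meson less_asym)
  moreover have "\<exists>!p. endemic_eq f k (fst p) (snd p)" if f0: "k < f 0"
  proof -
    have cont: "continuous_on {0..1} f"
      using deriv by (intro DERIV_continuous_on) auto
    obtain I R where eq: "endemic_eq f k I R"
      using endemic_eq_exists[OF k cont f0] by blast
    show ?thesis
      by (rule ex1I[of _ "(I, R)"]) (use eq endemic_eq_unique[OF k pos anti] in auto)
  qed
  moreover have "locally_stable f f' k I R" if eq: "endemic_eq f k I R" for I R
  proof -
    have R: "R \<in> {0<..<1}"
      using endemic_eq_mem_interval[OF k pos eq] .
    then have "f' R \<le> 0"
      using antimono_on_Icc_imp_deriv_nonpos[OF anti R] deriv by simp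
    then show ?thesis
      using endemic_eq_locally_stable[OF k _ _ eq] pos R by simp
  qed
  moreover have "f 0 / k < 1 \<longleftrightarrow> f 0 < k" "f 0 / k > 1 \<longleftrightarrow> k < f 0"
    using k by (simp_all add: divide_less_eq less_divide_eq)
  ultimately show ?thesis
    by blast
qed

end
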